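(* For $b>\sqrt{\pi/2}$ let $\phi_b$ be the solution of $\phi''=8\pi(1-e^\phi)$ on $\mathbb R$ with smallest period $b$ attaining its maximum at $y=0$, let $\phi_0=\phi_b(0)$, $f_0=e^{\phi_0}-\phi_0$, $\beta=\sqrt\pi\,b$, and define $\rho(\beta,s)=\phi_b(bs/2)$ and $$M=M(\beta)=\frac12\int_0^1\rho(1+e^\rho)\,ds.$$ Then (a) $\displaystyle\frac{dM}{d\beta}=\frac1\beta\int_0^1\rho(1-e^\rho)\,ds$; (b) $\displaystyle\frac{d(\beta M)}{d\beta}=\frac12\int_0^1\rho(3-e^\rho)\,ds=1-f_0$.
   Context: For each $b>\sqrt{\pi/2}$ there is a unique smooth solution $\phi_b$ of $\phi''=8\pi(1-e^{\phi})$ on $\mathbb R$ which is periodic with smallest period $b$ and attains its maximum at $y=0$; it is even, depends smoothly on $b$, and $\rho(\beta,s)$ satisfies $\partial_s^2\rho=2\beta^2(1-e^\rho)$. *)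

theory Defs
  imports "HOL-Analysis.Analysis"
begin

definition is_phi_b :: "real \<Rightarrow> (real \<Rightarrow> real) \<Rightarrow> bool" where
  "is_phi_b b \<phi> \<longleftrightarrow>
     (\<forall>y. (\<phi> has_real_derivative deriv \<phi> y) (at y)) \<and>
     (\<forall>y. (deriv \<phi> has_real_derivative 8 * pi * (1 - exp (\<phi> y))) (at y)) \<and>
     b > 0 \<and> (\<forall>y. \<phi> (y + b) = \<phi> y) \<and>
     (\<forall>p. 0 < p \<and> p < b \<longrightarrow> \<not> (\<forall>y. \<phi> (y + p) = \<phi> y)) \<and>
     (\<forall>y. \<phi> y \<le> \<phi> 0)"

definition rho :: "(real \<Rightarrow> real \<Rightarrow> real) \<Rightarrow> real \<Rightarrow> real \<Rightarrow> real" where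
  "rho phi \<beta> s = phi (\<beta> / sqrt pi) ((\<beta> / sqrt pi) * s / 2)"

definition Mfun :: "(real \<Rightarrow> real \<Rightarrow> real) \<Rightarrow> real \<Rightarrow> real" where
  "Mfun phi \<beta> = 1/2 * integral {0..1} (\<lambda>s. rho phi \<beta> s * (1 + exp (rho phi \<beta> s)))"

end

theory Submission
  imports Defs
begin

text \<open>Write r x s for rho(x, s). Evenness of phi_b (uniqueness for the ODE through its maximum)
  and periodicity give the Neumann problem r'' = 2 x^2 (1 - exp r), r'(0) = r'(1) = 0 for each x.
  Integrating it gives int exp r = 1, hence int exp r * d_x r = 0. Green's formula makes
  int r_y * 2 x^2 (1 - exp r_x) symmetric in x and y, and differentiating this symmetry in x at
  x = y = beta is exactly the relation that turns M' = 1/2 int (1 + exp r + r exp r) d_beta r into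
  (1/beta) int r (1 - exp r). For (b), the first integral r'^2 + 4 beta^2 (exp r - r) = 4 beta^2 f_0
  together with int r r'' = - int r'^2 evaluates int r (3 - exp r).\<close>

lemma abs_exp_diff_le:
  fixes a b m :: real
  assumes "a \<le> m" "b \<le> m"
  shows "\<bar>exp a - exp b\<bar> \<le> exp m * \<bar>a - b\<bar>"
proof -
  have *: "exp y - exp x \<le> exp m * (y - x)" if "x \<le> y" "y \<le> m" for x y :: real
  proof -
    have "exp y - exp x = exp y * (1 - exp (x - y))"
      by (simp add: right_diff_distrib exp_diff)
    also have "\<dots> \<le> exp y * (y - x)"
      using exp_ge_add_one_self[of "x - y"] by (intro mult_left_mono) (linarith, simp)
    also have "\<dots> \<le> exp m * (y - x)"
      using that by (intro mult_right_mono) auto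
    finally show ?thesis .
  qed
  show ?thesis
    using *[of a b] *[of b a] assms by (cases "a \<le> b") (auto simp: abs_if)
qed

lemma nonneg_vanishing_by_gronwall:
  fixes E E' :: "real \<Rightarrow> real"
  assumes deriv: "\<And>y. (E has_real_derivative E' y) (at y)"
    and bound: "\<And>y. E' y \<le> C * E y"
    and nonneg: "\<And>y. 0 \<le> E y" and "E 0 = 0" and "0 \<le> y"
  shows "E y = 0"
proof -
  define h where "h y = exp (- C * y) * E y" for y
  have "h y \<le> h 0"
  proof (rule DERIV_nonpos_imp_nonincreasing[OF \<open>0 \<le> y\<close>])
    fix x :: real
    have "(h has_real_derivative exp (- C * x) * (E' x - C * E x)) (at x)"
      unfolding h_def by (auto intro!: derivative_eq_intros deriv simp: algebra_simps)
    moreover have "exp (- C * x) * (E' x - C * E x) \<le> 0"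
      using bound[of x] by (intro mult_nonneg_nonpos) auto
    ultimately show "\<exists>d. (h has_real_derivative d) (at x) \<and> d \<le> 0" by blast
  qed
  then show ?thesis
    using \<open>E 0 = 0\<close> nonneg[of y] by (simp add: h_def mult_le_0_iff)
qed

lemma even_of_max_at_0:
  fixes f f' :: "real \<Rightarrow> real" and k :: real
  assumes d1: "\<And>y. (f has_real_derivative f' y) (at y)"
    and d2: "\<And>y. (f' has_real_derivative k * (1 - exp (f y))) (at y)"
    and "0 \<le> k" and max: "\<And>y. f y \<le> f 0"
  shows "f (-y) = f y"
proof -
  have "f' 0 = 0"
    by (rule DERIV_local_max[OF d1, of 1]) (auto simp: max)
  \<comment> \<open>\<open>(g, g')\<close> solves the same first-order system as \<open>(f, f')\<close> with the same data at 0\<close>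
  define g where "g y = f (-y)" for y
  define g' where "g' y = - f' (-y)" for y
  have g1: "(g has_real_derivative g' y) (at y)" for y
    unfolding g_def g'_def using DERIV_chain2[OF d1 DERIV_minus[OF DERIV_ident]] by (simp add: o_def)
  have g2: "(g' has_real_derivative k * (1 - exp (g y))) (at y)" for y
    unfolding g_def g'_def
    using DERIV_minus[OF DERIV_chain2[OF d2 DERIV_minus[OF DERIV_ident]]] by (simp add: o_def)
  define C where "C = 1 + k * exp (f 0)"
  define E where "E y = (f y - g y)^2 + (f' y - g' y)^2" for y
  define E' where "E' y = 2 * (f y - g y) * (f' y - g' y) + 2 * (f' y - g' y) * (k * (exp (g y) - exp (f y)))" for y
  have dE: "(E has_real_derivative E' y) (at y)" for y
    unfolding E_def E'_def by (auto intro!: derivative_eq_intros d1 d2 g1 g2 simp: algebra_simps)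
  have E'_bound: "E' y \<le> C * E y" for y
  proof -
    let ?d = "\<bar>f y - g y\<bar>" and ?e = "\<bar>f' y - g' y\<bar>"
    have "(f' y - g' y) * (exp (g y) - exp (f y)) \<le> ?e * \<bar>exp (g y) - exp (f y)\<bar>"
      by (metis abs_ge_self abs_mult)
    also have "\<dots> \<le> ?e * (exp (f 0) * ?d)"
      using abs_exp_diff_le[OF max[of "-y"] max[of y]]
      by (intro mult_left_mono) (simp_all add: g_def abs_minus_commute)
    finally have "k * ((f' y - g' y) * (exp (g y) - exp (f y))) \<le> k * (?e * (exp (f 0) * ?d))"
      using \<open>0 \<le> k\<close> by (rule mult_left_mono)
    moreover have "(f y - g y) * (f' y - g' y) \<le> ?d * ?e"
      by (metis abs_ge_self abs_mult)
    ultimately have "E' y \<le> C * (2 * ?d * ?e)"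
      by (simp add: E'_def C_def algebra_simps)
    also have "\<dots> \<le> C * E y"
      using \<open>0 \<le> k\<close> sum_squares_bound[of ?d ?e]
      by (intro mult_left_mono) (auto simp: E_def C_def power2_eq_square)
    finally show ?thesis .
  qed
  have E_0: "E 0 = 0" using \<open>f' 0 = 0\<close> by (simp add: E_def g_def g'_def)
  have "E y = 0" if "0 \<le> y" for y
    by (rule nonneg_vanishing_by_gronwall[OF dE E'_bound _ E_0 that]) (simp add: E_def)
  then have "f y = f (-y)" if "0 \<le> y" for y
    using that by (simp add: E_def g_def add_nonneg_eq_0_iff)
  from this[of y] this[of "-y"] show ?thesis by (cases "0 \<le> y") auto
qed

lemma is_phi_bD:
  assumes "is_phi_b b f"
  shows "(f has_real_derivative deriv f y) (at y)"
    and "(deriv f has_real_derivative 8 * pi * (1 - exp (f y))) (at y)"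
    and "f (y + b) = f y" and "f y \<le> f 0"
  using assms unfolding is_phi_b_def by blast+

lemma is_phi_b_even:
  assumes "is_phi_b b f"
  shows "f (-y) = f y"
  by (rule even_of_max_at_0[OF is_phi_bD(1,2)[OF assms]]) (auto intro: is_phi_bD(4)[OF assms])

lemma is_phi_b_deriv_0:
  assumes "is_phi_b b f"
  shows "deriv f 0 = 0"
  by (rule DERIV_local_max[OF is_phi_bD(1)[OF assms], of 1]) (auto intro: is_phi_bD(4)[OF assms])

text \<open>Evenness and periodicity make \<open>f\<close> symmetric about the half period.\<close>
lemma is_phi_b_deriv_half_period:
  assumes "is_phi_b b f"
  shows "deriv f (b/2) = 0"
proof -
  have symm: "f (b/2 - t) = f (b/2 + t)" for t
  proof -
    have "f (b/2 + t) = f ((t - b/2) + b)" by (simp add: algebra_simps)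
    also have "\<dots> = f (t - b/2)" by (rule is_phi_bD(3)[OF assms])
    also have "\<dots> = f (- (b/2 - t))" by simp
    also have "\<dots> = f (b/2 - t)" by (rule is_phi_b_even[OF assms])
    finally show ?thesis by simp
  qed
  have right: "((\<lambda>t. f (b/2 + t)) has_real_derivative deriv f (b/2) * 1) (at 0)"
    using is_phi_bD(1)[OF assms, of "b/2"]
    by (intro DERIV_chain2[where g="\<lambda>t. b/2 + t"]) (auto intro!: derivative_eq_intros)
  have left: "((\<lambda>t. f (b/2 - t)) has_real_derivative deriv f (b/2) * (-1)) (at 0)"
    using is_phi_bD(1)[OF assms, of "b/2"]
    by (intro DERIV_chain2[where g="\<lambda>t. b/2 - t"]) (auto intro!: derivative_eq_intros)
  show ?thesis
    using DERIV_unique[OF right left[unfolded symm]] by simp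
qed

lemma is_phi_b_rescaled:
  assumes phi: "is_phi_b b f"
  defines "g \<equiv> \<lambda>s. f (b * s / 2)"
  shows "(g has_real_derivative deriv g s) (at s)"
    and "(deriv g has_real_derivative 2 * pi * b^2 * (1 - exp (g s))) (at s)"
    and "deriv g 0 = 0" and "deriv g 1 = 0"
proof -
  have dg: "(g has_real_derivative b/2 * deriv f (b * s / 2)) (at s)" for s
  proof -
    have "(g has_real_derivative deriv f (b * s / 2) * (b/2)) (at s)"
      unfolding g_def by (rule DERIV_chain2[OF is_phi_bD(1)[OF phi]]) (auto intro!: derivative_eq_intros)
    then show ?thesis by (rule DERIV_cong) simp
  qed
  then have deriv_g: "deriv g = (\<lambda>s. b/2 * deriv f (b * s / 2))"
    using DERIV_imp_deriv by blast
  show "(g has_real_derivative deriv g s) (at s)"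
    unfolding deriv_g by (rule dg)
  have "((\<lambda>s. deriv f (b * s / 2)) has_real_derivative 8 * pi * (1 - exp (g s)) * (b/2)) (at s)"
    unfolding g_def by (rule DERIV_chain2[OF is_phi_bD(2)[OF phi]]) (auto intro!: derivative_eq_intros)
  from DERIV_cmult[OF this, of "b/2"]
  show "(deriv g has_real_derivative 2 * pi * b^2 * (1 - exp (g s))) (at s)"
    unfolding deriv_g by (rule DERIV_cong) (simp add: power2_eq_square)
  show "deriv g 0 = 0" "deriv g 1 = 0"
    by (simp_all add: deriv_g is_phi_b_deriv_0[OF phi] is_phi_b_deriv_half_period[OF phi])
qed

lemma integral_by_parts_neumann_01:
  fixes u u' v v' v'' :: "real \<Rightarrow> real"
  assumes du: "\<And>s. (u has_real_derivative u' s) (at s)"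
    and dv: "\<And>s. (v' has_real_derivative v'' s) (at s)"
    and cont: "continuous_on {0..1} v''"
    and "v' 0 = 0" and "v' 1 = 0"
  shows "integral {0..1} (\<lambda>s. u s * v'' s) = - integral {0..1} (\<lambda>s. u' s * v' s)"
proof -
  have "((\<lambda>s. u' s * v' s + u s * v'' s) has_integral u 1 * v' 1 - u 0 * v' 0) {0..1}"
  proof (rule fundamental_theorem_of_calculus)
    fix x :: real
    have "((\<lambda>s. u s * v' s) has_real_derivative u' x * v' x + u x * v'' x) (at x)"
      by (auto intro!: derivative_eq_intros du dv)
    then show "((\<lambda>s. u s * v' s) has_vector_derivative u' x * v' x + u x * v'' x) (at x within {0..1})"
      by (simp add: has_real_derivative_iff_has_vector_derivative has_vector_derivative_at_within)
  qed simp
  then have sum: "((\<lambda>s. u' s * v' s + u s * v'' s) has_integral 0) {0..1}"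
    using \<open>v' 0 = 0\<close> \<open>v' 1 = 0\<close> by simp
  have "continuous_on {0..1} u"
    using du by (meson DERIV_continuous continuous_at_imp_continuous_on)
  then have "(\<lambda>s. u s * v'' s) integrable_on {0..1}"
    by (intro integrable_continuous_interval continuous_intros cont)
  from has_integral_diff[OF sum integrable_integral[OF this]]
  show ?thesis by (simp add: integral_unique)
qed

lemma has_real_derivative_param_integral:
  fixes f fx :: "real \<Rightarrow> real \<Rightarrow> real"
  assumes "open U" "convex U" "x0 \<in> U"
    and deriv: "\<And>x t. x \<in> U \<Longrightarrow> t \<in> {0..1} \<Longrightarrow> ((\<lambda>x. f x t) has_real_derivative fx x t) (at x)"
    and cont: "\<And>x. x \<in> U \<Longrightarrow> continuous_on {0..1} (f x)"
    and cont_fx: "continuous_on (U \<times> {0..1}) (\<lambda>p. fx (fst p) (snd p))"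
  shows "((\<lambda>x. integral {0..1} (f x)) has_real_derivative integral {0..1} (fx x0)) (at x0)"
proof -
  have "((\<lambda>x. integral (cbox 0 1) (f x)) has_real_derivative integral (cbox 0 1) (fx x0)) (at x0 within U)"
  proof (rule leibniz_rule_field_derivative[OF _ _ _ assms(3,2)])
    show "((\<lambda>x. f x t) has_real_derivative fx x t) (at x within U)" if "x \<in> U" "t \<in> cbox 0 1" for x t
      using deriv that by (simp add: has_field_derivative_at_within)
    show "f x integrable_on cbox 0 1" if "x \<in> U" for x
      using integrable_continuous_interval[OF cont[OF that]] by simp
    show "continuous_on (U \<times> cbox 0 1) (\<lambda>(x, t). fx x t)"
      using cont_fx by (simp add: case_prod_beta')
  qed
  then show ?thesis
    by (simp add: at_within_open[OF \<open>x0 \<in> U\<close> \<open>open U\<close>])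
qed

lemma DERIV_unique_on_open:
  fixes f g :: "real \<Rightarrow> real"
  assumes "open U" "x0 \<in> U" "\<And>x. x \<in> U \<Longrightarrow> f x = g x"
    and "(f has_real_derivative a) (at x0)" "(g has_real_derivative b) (at x0)"
  shows "a = b"
  using has_field_derivative_transform_within_open[OF assms(4,1,2,3)] assms(5) DERIV_unique by blast

locale neumann_family =
  fixes U :: "real set" and r W :: "real \<Rightarrow> real \<Rightarrow> real"
  assumes open_U: "open U" and convex_U: "convex U" and U_pos: "\<And>x. x \<in> U \<Longrightarrow> 0 < x"
    and r_deriv: "\<And>x s. x \<in> U \<Longrightarrow> (r x has_real_derivative deriv (r x) s) (at s)"
    and r_deriv2: "\<And>x s. x \<in> U \<Longrightarrow> (deriv (r x) has_real_derivative 2 * x^2 * (1 - exp (r x s))) (at s)"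
    and neumann_0: "\<And>x. x \<in> U \<Longrightarrow> deriv (r x) 0 = 0"
    and neumann_1: "\<And>x. x \<in> U \<Longrightarrow> deriv (r x) 1 = 0"
    and W_deriv: "\<And>x s. x \<in> U \<Longrightarrow> s \<in> {0..1} \<Longrightarrow> ((\<lambda>x. r x s) has_real_derivative W x s) (at x)"
    and r_continuous: "continuous_on (U \<times> {0..1}) (\<lambda>p. r (fst p) (snd p))"
    and W_continuous: "continuous_on (U \<times> {0..1}) (\<lambda>p. W (fst p) (snd p))"
begin

lemma continuous_on_r: "x \<in> U \<Longrightarrow> continuous_on {0..1} (r x)"
  using r_deriv by (meson DERIV_continuous continuous_at_imp_continuous_on)

lemma continuous_on_W: "x \<in> U \<Longrightarrow> continuous_on {0..1} (W x)"
  by (rule continuous_on_compose2[OF W_continuous, of _ "\<lambda>t. (x, t)", simplified])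
     (auto intro!: continuous_intros)

lemma continuous_on_r_fixed:
  "y \<in> U \<Longrightarrow> continuous_on (U \<times> {0..1}) (\<lambda>p. r y (snd p))"
  by (rule continuous_on_compose2[OF continuous_on_r]) (auto intro!: continuous_intros)

lemma integral_exp_r:
  assumes "x \<in> U"
  shows "integral {0..1} (\<lambda>s. exp (r x s)) = 1"
proof -
  have "((\<lambda>s. 2 * x^2 * (1 - exp (r x s))) has_integral deriv (r x) 1 - deriv (r x) 0) {0..1}"
  proof (rule fundamental_theorem_of_calculus)
    show "(deriv (r x) has_vector_derivative 2 * x^2 * (1 - exp (r x t))) (at t within {0..1})" for t
      using r_deriv2[OF assms, of t]
      by (simp add: has_real_derivative_iff_has_vector_derivative has_vector_derivative_at_within)
  qed simp
  then have "((\<lambda>s. 2 * x^2 * (1 - exp (r x s))) has_integral 0) {0..1}"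
    using neumann_0[OF assms] neumann_1[OF assms] by simp
  from has_integral_mult_right[OF this, of "1 / (2 * x^2)"]
  have "((\<lambda>s. 1 - exp (r x s)) has_integral 0) {0..1}"
    using U_pos[OF assms] by simp
  from has_integral_diff[OF has_integral_const_real[of 1 0 1] this]
  show ?thesis by (simp add: integral_unique)
qed

lemma integral_exp_r_mul_W:
  assumes "x \<in> U"
  shows "integral {0..1} (\<lambda>s. exp (r x s) * W x s) = 0"
proof -
  have "((\<lambda>y. integral {0..1} (\<lambda>s. exp (r y s))) has_real_derivative
      integral {0..1} (\<lambda>s. exp (r x s) * W x s)) (at x)"
  proof (rule has_real_derivative_param_integral[OF open_U convex_U assms])
    show "((\<lambda>y. exp (r y t)) has_real_derivative exp (r y t) * W y t) (at y)"
      if "y \<in> U" "t \<in> {0..1}" for y t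
      using W_deriv[OF that] by (auto intro!: derivative_eq_intros)
    show "continuous_on {0..1} (\<lambda>s. exp (r y s))" if "y \<in> U" for y
      using continuous_on_r[OF that] by (intro continuous_intros)
    show "continuous_on (U \<times> {0..1}) (\<lambda>p. exp (r (fst p) (snd p)) * W (fst p) (snd p))"
      by (intro continuous_intros r_continuous W_continuous)
  qed
  from DERIV_unique_on_open[OF open_U assms _ this DERIV_const[of 1]]
  show ?thesis by (simp add: integral_exp_r)
qed

lemma integral_r_mul_rhs:
  "x \<in> U \<Longrightarrow> y \<in> U \<Longrightarrow> integral {0..1} (\<lambda>s. r y s * (2 * x^2 * (1 - exp (r x s))))
    = - integral {0..1} (\<lambda>s. deriv (r y) s * deriv (r x) s)"
  by (rule integral_by_parts_neumann_01[OF r_deriv r_deriv2])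
     (auto intro!: continuous_intros continuous_on_r neumann_0 neumann_1)

lemma integral_W_mul_rhs:
  assumes "\<beta> \<in> U"
  shows "integral {0..1} (\<lambda>s. W \<beta> s * (2 * \<beta>^2 * (1 - exp (r \<beta> s))))
    = integral {0..1} (\<lambda>s. r \<beta> s * (4 * \<beta> * (1 - exp (r \<beta> s)) - 2 * \<beta>^2 * (exp (r \<beta> s) * W \<beta> s)))"
proof -
  have symm: "integral {0..1} (\<lambda>s. r \<beta> s * (2 * x^2 * (1 - exp (r x s))))
      = integral {0..1} (\<lambda>s. r x s * (2 * \<beta>^2 * (1 - exp (r \<beta> s))))" if "x \<in> U" for x
    using integral_r_mul_rhs[OF that assms] integral_r_mul_rhs[OF assms that] by (simp add: mult.commute)
  have left: "((\<lambda>x. integral {0..1} (\<lambda>s. r \<beta> s * (2 * x^2 * (1 - exp (r x s))))) has_real_derivative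
      integral {0..1} (\<lambda>s. r \<beta> s * (4 * \<beta> * (1 - exp (r \<beta> s)) - 2 * \<beta>^2 * (exp (r \<beta> s) * W \<beta> s)))) (at \<beta>)"
    using W_deriv
    by (intro has_real_derivative_param_integral[OF open_U convex_U assms])
       (auto intro!: derivative_eq_intros continuous_intros continuous_on_r continuous_on_r_fixed
         r_continuous W_continuous assms simp: algebra_simps)
  have right: "((\<lambda>x. integral {0..1} (\<lambda>s. r x s * (2 * \<beta>^2 * (1 - exp (r \<beta> s))))) has_real_derivative
      integral {0..1} (\<lambda>s. W \<beta> s * (2 * \<beta>^2 * (1 - exp (r \<beta> s))))) (at \<beta>)"
    using W_deriv
    by (intro has_real_derivative_param_integral[OF open_U convex_U assms])
       (auto intro!: derivative_eq_intros continuous_intros continuous_on_r continuous_on_r_fixed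
         W_continuous assms)
  show ?thesis
    using DERIV_unique_on_open[OF open_U assms symm left right] by simp
qed

lemma mass_has_real_derivative:
  assumes "\<beta> \<in> U"
  shows "((\<lambda>x. 1/2 * integral {0..1} (\<lambda>s. r x s * (1 + exp (r x s)))) has_real_derivative
    1/\<beta> * integral {0..1} (\<lambda>s. r \<beta> s * (1 - exp (r \<beta> s)))) (at \<beta>)"
proof -
  define F where "F s = W \<beta> s * (1 + exp (r \<beta> s)) + r \<beta> s * (exp (r \<beta> s) * W \<beta> s)" for s
  have deriv_F: "((\<lambda>x. integral {0..1} (\<lambda>s. r x s * (1 + exp (r x s)))) has_real_derivative integral {0..1} F) (at \<beta>)"
    unfolding F_def using W_deriv
    by (intro has_real_derivative_param_integral[OF open_U convex_U assms])
       (auto intro!: derivative_eq_intros continuous_intros continuous_on_r r_continuous W_continuous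
         simp: algebra_simps)
  have integral_F: "integral {0..1} F = 2/\<beta> * integral {0..1} (\<lambda>s. r \<beta> s * (1 - exp (r \<beta> s)))"
  proof -
    have [simp]: "continuous_on {0..1} (r \<beta>)" "continuous_on {0..1} (W \<beta>)"
      using assms by (simp_all add: continuous_on_r continuous_on_W)
    \<comment> \<open>the first two integrals agree by \<open>integral_W_mul_rhs\<close>, the last vanishes\<close>
    have "2 * \<beta>^2 * integral {0..1} F
      = integral {0..1} (\<lambda>s. W \<beta> s * (2 * \<beta>^2 * (1 - exp (r \<beta> s))))
        - integral {0..1} (\<lambda>s. r \<beta> s * (4 * \<beta> * (1 - exp (r \<beta> s)) - 2 * \<beta>^2 * (exp (r \<beta> s) * W \<beta> s)))
        + 4 * \<beta> * integral {0..1} (\<lambda>s. r \<beta> s * (1 - exp (r \<beta> s)))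
        + 4 * \<beta>^2 * integral {0..1} (\<lambda>s. exp (r \<beta> s) * W \<beta> s)"
    proof -
      have "(\<lambda>s. 2 * \<beta>^2 * F s) = (\<lambda>s. W \<beta> s * (2 * \<beta>^2 * (1 - exp (r \<beta> s)))
        - r \<beta> s * (4 * \<beta> * (1 - exp (r \<beta> s)) - 2 * \<beta>^2 * (exp (r \<beta> s) * W \<beta> s))
        + 4 * \<beta> * (r \<beta> s * (1 - exp (r \<beta> s))) + 4 * \<beta>^2 * (exp (r \<beta> s) * W \<beta> s))"
        by (rule ext) (simp add: F_def algebra_simps)
      from arg_cong[where f="integral {0..1}", OF this] show ?thesis
        by (simp add: integral_add integral_diff integrable_continuous_interval continuous_intros)
    qed
    then show ?thesis
      using integral_W_mul_rhs[OF assms] integral_exp_r_mul_W[OF assms] U_pos[OF assms]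
      by (simp add: field_simps power2_eq_square)
  qed
  from DERIV_cmult[OF deriv_F, of "1/2"] show ?thesis
    by (rule DERIV_cong) (simp add: integral_F)
qed

lemma times_mass_has_real_derivative:
  assumes "\<beta> \<in> U"
  shows "((\<lambda>x. x * (1/2 * integral {0..1} (\<lambda>s. r x s * (1 + exp (r x s))))) has_real_derivative
    1/2 * integral {0..1} (\<lambda>s. r \<beta> s * (3 - exp (r \<beta> s)))) (at \<beta>)"
proof -
  have [simp]: "continuous_on {0..1} (r \<beta>)"
    using assms by (rule continuous_on_r)
  have "(\<lambda>s. r \<beta> s * (3 - exp (r \<beta> s)))
      = (\<lambda>s. r \<beta> s * (1 + exp (r \<beta> s)) + 2 * (r \<beta> s * (1 - exp (r \<beta> s))))"
    by (rule ext) (simp add: algebra_simps)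
  then have "1/2 * integral {0..1} (\<lambda>s. r \<beta> s * (3 - exp (r \<beta> s)))
      = 1/2 * integral {0..1} (\<lambda>s. r \<beta> s * (1 + exp (r \<beta> s)))
        + integral {0..1} (\<lambda>s. r \<beta> s * (1 - exp (r \<beta> s)))"
    by (simp add: integral_add integrable_continuous_interval continuous_intros)
  with DERIV_mult[OF DERIV_ident mass_has_real_derivative[OF assms]] U_pos[OF assms]
  show ?thesis by (auto elim: DERIV_cong)
qed

lemma first_integral:
  assumes "x \<in> U"
  shows "(deriv (r x) s)^2 + 4 * x^2 * (exp (r x s) - r x s) = 4 * x^2 * (exp (r x 0) - r x 0)"
proof -
  define K where "K s = (deriv (r x) s)^2 + 4 * x^2 * (exp (r x s) - r x s)" for s
  have "(K has_real_derivative 0) (at s)" for s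
    unfolding K_def using r_deriv[OF assms] r_deriv2[OF assms]
    by (auto intro!: derivative_eq_intros simp: algebra_simps)
  then have "K s = K 0"
    by (intro DERIV_isconst_all) blast
  then show ?thesis
    by (simp add: K_def neumann_0[OF assms])
qed

lemma integral_r_mul_3_minus_exp:
  assumes "x \<in> U"
  shows "1/2 * integral {0..1} (\<lambda>s. r x s * (3 - exp (r x s))) = 1 - (exp (r x 0) - r x 0)"
proof -
  define f0 where "f0 = exp (r x 0) - r x 0"
  have [simp]: "continuous_on {0..1} (r x)"
    using assms by (rule continuous_on_r)
  have "(\<lambda>s. deriv (r x) s * deriv (r x) s) = (\<lambda>s. 4 * x^2 * f0 + 4 * x^2 * r x s - 4 * x^2 * exp (r x s))"
    using first_integral[OF assms] by (intro ext) (simp add: f0_def power2_eq_square algebra_simps)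
  then have "integral {0..1} (\<lambda>s. deriv (r x) s * deriv (r x) s)
      = 4 * x^2 * f0 + 4 * x^2 * integral {0..1} (r x) - 4 * x^2"
    by (simp add: integral_add integral_diff integrable_continuous_interval continuous_intros
        integral_exp_r[OF assms])
  moreover have "(\<lambda>s. r x s * (2 * x^2 * (1 - exp (r x s)))) = (\<lambda>s. 2 * x^2 * (r x s * (1 - exp (r x s))))"
    by (rule ext) (simp add: algebra_simps)
  ultimately have "2 * x^2 * integral {0..1} (\<lambda>s. r x s * (1 - exp (r x s)))
      = - (4 * x^2 * f0 + 4 * x^2 * integral {0..1} (r x) - 4 * x^2)"
    using integral_r_mul_rhs[OF assms assms] by simp
  then have "x^2 * (integral {0..1} (\<lambda>s. r x s * (1 - exp (r x s))) - (2 - 2 * f0 - 2 * integral {0..1} (r x))) = 0"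
    by (simp add: algebra_simps)
  then have "integral {0..1} (\<lambda>s. r x s * (1 - exp (r x s))) = 2 - 2 * f0 - 2 * integral {0..1} (r x)"
    using U_pos[OF assms] by simp
  moreover have "(\<lambda>s. r x s * (3 - exp (r x s))) = (\<lambda>s. 2 * r x s + r x s * (1 - exp (r x s)))"
    by (rule ext) (simp add: algebra_simps)
  ultimately show ?thesis
    by (simp add: f0_def integral_add integrable_continuous_interval continuous_intros)
qed

end

lemma neumann_family_rho:
  fixes phi :: "real \<Rightarrow> real \<Rightarrow> real"
  assumes sol: "\<And>b. b > sqrt (pi / 2) \<Longrightarrow> is_phi_b b (phi b)"
    and smooth: "\<exists>D. (\<forall>p \<in> {b. b > sqrt (pi / 2)} \<times> UNIV.
                   ((\<lambda>q. phi (fst q) (snd q)) has_derivative blinfun_apply (D p)) (at p)) \<and>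
                 continuous_on ({b. b > sqrt (pi / 2)} \<times> UNIV) D"
  shows "\<exists>W. neumann_family {sqrt pi * sqrt (pi / 2)<..} (rho phi) W"
proof -
  define S where "S = {b. b > sqrt (pi / 2)} \<times> (UNIV :: real set)"
  define U where "U = {sqrt pi * sqrt (pi / 2)<..}"
  define \<Phi> where "\<Phi> q = phi (fst q) (snd q)" for q :: "real \<times> real"
  obtain D where D: "\<And>p. p \<in> S \<Longrightarrow> (\<Phi> has_derivative blinfun_apply (D p)) (at p)"
    and cont_D: "continuous_on S D"
    using smooth unfolding S_def \<Phi>_def by blast
  define v where "v s = (1 / sqrt pi, s / (2 * sqrt pi))" for s
  have rho_ray: "rho phi x s = \<Phi> (x *\<^sub>R v s)" for x s
    by (simp add: rho_def \<Phi>_def v_def mult.commute)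
  have period_admissible: "x / sqrt pi > sqrt (pi / 2)" if "x \<in> U" for x
    using that by (simp add: U_def pos_less_divide_eq mult.commute)
  then have ray_in_S: "x *\<^sub>R v s \<in> S" if "x \<in> U" for x s
    using that by (simp add: S_def v_def)
  have rescaled: "rho phi x = (\<lambda>s. phi (x / sqrt pi) (x / sqrt pi * s / 2))" for x
    by (simp add: rho_def fun_eq_iff)
  have scale: "2 * pi * (x / sqrt pi)^2 = 2 * x^2" for x
    by (simp add: power_divide)
  have "neumann_family U (rho phi) (\<lambda>x s. D (x *\<^sub>R v s) (v s))"
  proof
    show "open U" "convex U"
      by (simp_all add: U_def)
    show "0 < x" if "x \<in> U" for x
    proof -
      have "0 < sqrt pi * sqrt (pi / 2)" by simp
      moreover have "sqrt pi * sqrt (pi / 2) < x" using that by (simp add: U_def)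
      ultimately show ?thesis by linarith
    qed
    show "(rho phi x has_real_derivative deriv (rho phi x) s) (at s)"
      and "(deriv (rho phi x) has_real_derivative 2 * x^2 * (1 - exp (rho phi x s))) (at s)"
      and "deriv (rho phi x) 0 = 0" and "deriv (rho phi x) 1 = 0" if "x \<in> U" for x s
      using is_phi_b_rescaled[OF sol[OF period_admissible[OF that]]]
      by (simp_all only: rescaled scale)
    show "((\<lambda>x. rho phi x s) has_real_derivative D (x *\<^sub>R v s) (v s)) (at x)" if "x \<in> U" for x s
    proof -
      have "((\<lambda>x. \<Phi> (x *\<^sub>R v s)) has_derivative (\<lambda>h. D (x *\<^sub>R v s) (h *\<^sub>R v s))) (at x)"
        by (rule has_derivative_compose[where f="\<lambda>x. x *\<^sub>R v s", OF _ D[OF ray_in_S[OF that]]])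
           (auto intro!: derivative_eq_intros)
      then show ?thesis
        by (simp add: rho_ray has_field_derivative_def blinfun.scaleR_right mult_commute_abs)
    qed
    have cont_ray: "continuous_on (U \<times> {0..1}) (\<lambda>p. fst p *\<^sub>R v (snd p))"
      by (auto simp: v_def intro!: continuous_intros)
    have ray_image: "(\<lambda>p. fst p *\<^sub>R v (snd p)) ` (U \<times> {0..1}) \<subseteq> S"
      using ray_in_S by auto
    have "continuous_on S \<Phi>"
      using D by (meson has_derivative_continuous continuous_at_imp_continuous_on)
    from continuous_on_compose2[OF this cont_ray ray_image]
    show "continuous_on (U \<times> {0..1}) (\<lambda>p. rho phi (fst p) (snd p))"
      by (simp add: rho_ray)
    show "continuous_on (U \<times> {0..1}) (\<lambda>p. D (fst p *\<^sub>R v (snd p)) (v (snd p)))"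
      using continuous_on_compose2[OF cont_D cont_ray ray_image]
      by (auto simp: v_def intro!: continuous_intros)
  qed
  then show ?thesis
    unfolding U_def by blast
qed

theorem proposition2p4:
  fixes phi :: "real \<Rightarrow> real \<Rightarrow> real"
  assumes sol: "\<And>b. b > sqrt (pi / 2) \<Longrightarrow> is_phi_b b (phi b)"
    and smooth: "\<exists>D. (\<forall>p \<in> {b. b > sqrt (pi / 2)} \<times> UNIV.
                   ((\<lambda>q. phi (fst q) (snd q)) has_derivative blinfun_apply (D p)) (at p)) \<and>
                 continuous_on ({b. b > sqrt (pi / 2)} \<times> UNIV) D"
    and beta: "\<beta> > sqrt pi * sqrt (pi / 2)"
  shows "(Mfun phi has_real_derivative
            (1 / \<beta>) * integral {0..1} (\<lambda>s. rho phi \<beta> s * (1 - exp (rho phi \<beta> s)))) (at \<beta>) \<and>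
          ((\<lambda>x. x * Mfun phi x) has_real_derivative
            1/2 * integral {0..1} (\<lambda>s. rho phi \<beta> s * (3 - exp (rho phi \<beta> s)))) (at \<beta>) \<and>
          1/2 * integral {0..1} (\<lambda>s. rho phi \<beta> s * (3 - exp (rho phi \<beta> s)))
           = 1 - (exp (phi (\<beta> / sqrt pi) 0) - phi (\<beta> / sqrt pi) 0)"
proof -
  obtain W where "neumann_family {sqrt pi * sqrt (pi / 2)<..} (rho phi) W"
    using neumann_family_rho[OF sol smooth] by blast
  then interpret neumann_family "{sqrt pi * sqrt (pi / 2)<..}" "rho phi" W .
  have \<beta>: "\<beta> \<in> {sqrt pi * sqrt (pi / 2)<..}"
    using beta by simp
  have "Mfun phi = (\<lambda>x. 1/2 * integral {0..1} (\<lambda>s. rho phi x s * (1 + exp (rho phi x s))))"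
    by (simp add: Mfun_def fun_eq_iff)
  moreover have "rho phi \<beta> 0 = phi (\<beta> / sqrt pi) 0"
    by (simp add: rho_def)
  ultimately show ?thesis
    using mass_has_real_derivative[OF \<beta>] times_mass_has_real_derivative[OF \<beta>]
      integral_r_mul_3_minus_exp[OF \<beta>]
    by simp
qed

end
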